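(* Let $n\ge 1$, let $C=(c_{i,j})$ be an $n\times n$ Bott matrix over $\mathbb{Z}_2$, and let $Y_n=Y(C)$ be the associated real Bott tower. Let $W$ be the right-angled Coxeter group with generators $s_1,\dots,s_{2n}$ and relations $s_j^2=1$ for $1\le j\le 2n$ and $(s_is_j)^2=1$ for all $1\le i<j\le 2n$ with $j\neq i+n$. For $n+1\le j\le 2n$ put $$\alpha_j:=s_j\,s_{j-n}\,s_{j-n+1}^{c_{j-n,j-n+1}}\,s_{j-n+2}^{c_{j-n,j-n+2}}\cdots s_n^{c_{j-n,n}}\in W$$ (so $\alpha_{2n}=s_{2n}s_n$). Then $\pi_1(Y_n)$, viewed as the kernel of the homomorphism $W\to\mathbb{Z}_2^n$ sending $s_i\mapsto\lambda(F_i)$, is generated by $\{\alpha_j: n+1\le j\le 2n\}$, and a complete set of defining relations for $\pi_1(Y_n)$ on these generators is $\{x_{p,q}: n+1\le p<q\le 2n\}$, where $$x_{p,q}=\begin{cases}\alpha_p\alpha_q\alpha_p^{-1}\alpha_q^{-1} & \text{if } c_{p-n,q-n}=0,\\ \alpha_p\alpha_q^{-1}\alpha_p^{-1}\alpha_q^{-1} & \text{if } c_{p-n,q-n}=1.\end{cases}$$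
   Context: A Bott matrix is an $n\times n$ matrix $C=(c_{i,j})$ with entries in $\mathbb{Z}_2=\mathbb{Z}/2\mathbb{Z}$ such that $c_{i,i}=1$ and $c_{i,j}=0$ for $i>j$. Let $I^n$ be the $n$-cube, with its $2n$ facets labelled $F_1,\dots,F_{2n}$ so that $F_j$ and $F_{n+j}$ are opposite (disjoint) facets for $1\le j\le n$. Let $e_1,\dots,e_n$ be the standard basis of $\mathbb{Z}_2^n$ and define $\lambda(F_j)=e_j$ and $\lambda(F_{n+j})=e_j+\sum_{k=j+1}^n c_{j,k}e_k$ for $1\le j\le n$. The real Bott tower $Y_n=Y(C)$ is the small cover $(\mathbb{Z}_2^n\times I^n)/\sim$, where $(t,p)\sim(t',p')$ iff $p=p'$ and $t-t'$ lies in the subgroup of $\mathbb{Z}_2^n$ spanned by $\lambda(F)$ for the facets $F$ containing $p$. Equivalently, $Y_n$ is the real toric variety of the complete smooth fan in $\mathbb{R}^n$ whose cones are spanned by subsets of $\{v_1,\dots,v_{2n}\}$ not containing both $v_i$ and $v_{n+i}$, where $v_j=e_j$ and $v_{n+j}=-e_j+\sum_{k>j}c_{j,k}e_k$. It is a closed smooth $n$-manifold obtained as an iterated $\mathbb{R}P^1$-bundle. *)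

theory Defs
  imports "HOL-Algebra.Algebra"
begin

text \<open>Words in the free group on letters of type 'a: a letter (a, True) is the
generator a, a letter (a, False) is its inverse.\<close>

type_synonym 'a fword = "('a \<times> bool) list"

text \<open>Equality in the free group modulo the normal closure of the relator set R:
the smallest congruence on words containing free cancellation and r = 1 for r in R.\<close>

inductive pres_eq :: "'a fword set \<Rightarrow> 'a fword \<Rightarrow> 'a fword \<Rightarrow> bool" for R where
  pe_refl: "pres_eq R w w"
| pe_sym: "pres_eq R u v \<Longrightarrow> pres_eq R v u"
| pe_trans: "pres_eq R u v \<Longrightarrow> pres_eq R v w \<Longrightarrow> pres_eq R u w"
| pe_cancel: "pres_eq R (xs @ [(a, b), (a, \<not> b)] @ ys) (xs @ ys)"
| pe_rel: "r \<in> R \<Longrightarrow> pres_eq R (xs @ r @ ys) (xs @ ys)"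

definition words_over :: "'a set \<Rightarrow> 'a fword set" where
  "words_over A = {w. set (map fst w) \<subseteq> A}"

definition pres_class :: "'a set \<Rightarrow> 'a fword set \<Rightarrow> 'a fword \<Rightarrow> 'a fword set" where
  "pres_class A R w = {v \<in> words_over A. pres_eq R w v}"

definition pres_mult :: "'a set \<Rightarrow> 'a fword set \<Rightarrow> 'a fword set \<Rightarrow> 'a fword set \<Rightarrow> 'a fword set" where
  "pres_mult A R U V = pres_class A R ((SOME u. u \<in> U) @ (SOME v. v \<in> V))"

definition pres_group :: "'a set \<Rightarrow> 'a fword set \<Rightarrow> 'a fword set monoid" where
  "pres_group A R =
    \<lparr>carrier = pres_class A R ` words_over A,
     monoid.mult = pres_mult A R,
     one = pres_class A R []\<rparr>"

text \<open>An n x n matrix over Z_2, indices 1..n, entries as booleans (True = 1).\<close>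

definition bott_matrix :: "nat \<Rightarrow> (nat \<Rightarrow> nat \<Rightarrow> bool) \<Rightarrow> bool" where
  "bott_matrix n C \<longleftrightarrow> (\<forall>i\<in>{1..n}. C i i) \<and> (\<forall>i j. 1 \<le> j \<and> j < i \<and> i \<le> n \<longrightarrow> \<not> C i j)"

definition cox_rels :: "nat \<Rightarrow> nat fword set" where
  "cox_rels n =
     {[(j, True), (j, True)] | j. j \<in> {1..2*n}}
   \<union> {[(i, True), (j, True), (i, True), (j, True)] | i j.
        1 \<le> i \<and> i < j \<and> j \<le> 2*n \<and> j \<noteq> i + n}"

definition cox_W :: "nat \<Rightarrow> nat fword set monoid" where
  "cox_W n = pres_group {1..2*n} (cox_rels n)"

text \<open>Z_2^n as functions nat => bool supported in {1..n}, with pointwise xor.\<close>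

definition Z2n :: "nat \<Rightarrow> (nat \<Rightarrow> bool) monoid" where
  "Z2n n = \<lparr>carrier = {f. \<forall>k. f k \<longrightarrow> k \<in> {1..n}},
            monoid.mult = (\<lambda>f g k. f k \<noteq> g k),
            one = (\<lambda>_. False)\<rparr>"

text \<open>lambda(F_j): e_j for j \<le> n, and e_{j-n} + sum_{k>j-n} c_{j-n,k} e_k for j > n.\<close>

definition lam :: "(nat \<Rightarrow> nat \<Rightarrow> bool) \<Rightarrow> nat \<Rightarrow> nat \<Rightarrow> (nat \<Rightarrow> bool)" where
  "lam C n j = (if j \<le> n then (\<lambda>k. k = j)
                else (\<lambda>k. k = j - n \<or> (j - n < k \<and> k \<le> n \<and> C (j - n) k)))"

definition phi_word :: "(nat \<Rightarrow> nat \<Rightarrow> bool) \<Rightarrow> nat \<Rightarrow> nat fword \<Rightarrow> (nat \<Rightarrow> bool)" where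
  "phi_word C n w = (\<lambda>k. odd (length (filter (\<lambda>x. lam C n (fst x) k) w)))"

definition phi :: "(nat \<Rightarrow> nat \<Rightarrow> bool) \<Rightarrow> nat \<Rightarrow> nat fword set \<Rightarrow> (nat \<Rightarrow> bool)" where
  "phi C n U = phi_word C n (SOME w. w \<in> U)"

definition alpha_word :: "(nat \<Rightarrow> nat \<Rightarrow> bool) \<Rightarrow> nat \<Rightarrow> nat \<Rightarrow> nat fword" where
  "alpha_word C n j = [(j, True), (j - n, True)] @
      map (\<lambda>k. (k, True)) (filter (\<lambda>k. C (j - n) k) [j - n + 1 ..< n + 1])"

definition x_rel :: "(nat \<Rightarrow> nat \<Rightarrow> bool) \<Rightarrow> nat \<Rightarrow> nat \<Rightarrow> nat \<Rightarrow> nat fword" where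
  "x_rel C n p q = (if C (p - n) (q - n)
      then [(p, True), (q, False), (p, False), (q, False)]
      else [(p, True), (q, True), (p, False), (q, False)])"

definition bott_rels :: "(nat \<Rightarrow> nat \<Rightarrow> bool) \<Rightarrow> nat \<Rightarrow> nat fword set" where
  "bott_rels C n = {x_rel C n p q | p q. n + 1 \<le> p \<and> p < q \<and> q \<le> 2*n}"

end

theory Submission
  imports Defs
begin

text \<open>
  The parity map phi kills every alpha_j, so the subgroup H they generate lies in the kernel K.
  Modulo H each high generator s_{n+i} is a product of the pairwise commuting involutions
  s_1, ..., s_n, and conjugating an alpha_j by one of these gives alpha_j or its inverse. Hence every
  element of W is an element of H times a product of distinct low generators, and phi detects exactly
  which low generators occur; so H = K.

  The relators x_{p,q} say that conjugating alpha_q by alpha_p gives alpha_q or its inverse according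
  to c_{p-n,q-n}. They hold in W, so the alpha_j induce a homomorphism from the presented group onto H.
  In the presented group the same relations bring every element to the normal form
  alpha_{n+1}^{m_1} ... alpha_{2n}^{m_n}. Letting s_f and s_{n+f} act on the integers as the
  reflections x \<mapsto> -x and x \<mapsto> 1 - x, and all other generators trivially, alpha_{n+f} becomes the
  translation by 1, the alpha_{n+k} with k < f fix 0 and those with k > f act trivially; so the image
  of a normal form determines |m_f|, and the homomorphism is injective.
\<close>

lemma pres_eq_append_cong:
  assumes "pres_eq R u v" shows "pres_eq R (x @ u @ y) (x @ v @ y)"
  using assms
proof (induction rule: pres_eq.induct)
  case (pe_cancel xs a b ys)
  show ?case using pres_eq.pe_cancel[of R "x @ xs" a b "ys @ y"] by simp
next
  case (pe_rel r xs ys)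
  show ?case using pres_eq.pe_rel[OF pe_rel.hyps, of "x @ xs" "ys @ y"] by simp
qed (auto intro: pres_eq.intros)

lemma pres_eq_append:
  assumes "pres_eq R u u'" "pres_eq R v v'" shows "pres_eq R (u @ v) (u' @ v')"
  using pres_eq_append_cong[OF assms(1), of "[]" v] pres_eq_append_cong[OF assms(2), of u' "[]"]
  by (auto intro: pres_eq.pe_trans)

definition inv_word :: "'a fword \<Rightarrow> 'a fword" where
  "inv_word w = rev (map (\<lambda>(a, b). (a, \<not> b)) w)"

lemma inv_word_simps [simp]:
  "inv_word [] = []"
  "inv_word (x # w) = inv_word w @ [(fst x, \<not> snd x)]"
  "inv_word (u @ v) = inv_word v @ inv_word u"
  "inv_word (inv_word w) = w"
  by (auto simp: inv_word_def case_prod_beta rev_map comp_def)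

lemma pres_eq_append_inv_word: "pres_eq R (w @ inv_word w) []"
proof (induction w)
  case Nil then show ?case by (simp add: pres_eq.pe_refl)
next
  case (Cons x w)
  obtain a b where x: "x = (a, b)" by force
  have "pres_eq R ([x] @ (w @ inv_word w) @ [(a, \<not> b)]) ([x] @ [] @ [(a, \<not> b)])"
    by (rule pres_eq_append_cong[OF Cons.IH])
  moreover have "pres_eq R ([] @ [(a, b), (a, \<not> b)] @ []) ([] @ [])"
    by (rule pres_eq.pe_cancel)
  ultimately show ?case using x by (auto intro: pres_eq.pe_trans)
qed

lemma pres_eq_inv_word_append: "pres_eq R (inv_word w @ w) []"
  using pres_eq_append_inv_word[of R "inv_word w"] by simp

lemma words_over_simps [simp]:
  "[] \<in> words_over A"
  "x # w \<in> words_over A \<longleftrightarrow> fst x \<in> A \<and> w \<in> words_over A"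
  "u @ v \<in> words_over A \<longleftrightarrow> u \<in> words_over A \<and> v \<in> words_over A"
  "inv_word w \<in> words_over A \<longleftrightarrow> w \<in> words_over A"
  by (auto simp: words_over_def inv_word_def image_iff; force)+

lemma words_over_map_letter [simp]: "map (\<lambda>a. (a, b)) L \<in> words_over A \<longleftrightarrow> set L \<subseteq> A"
  by (simp add: words_over_def image_image)

lemma pres_class_eqI: "pres_eq R u v \<Longrightarrow> pres_class A R u = pres_class A R v"
  unfolding pres_class_def by (auto intro: pres_eq.pe_trans pres_eq.pe_sym)

lemma pres_class_rep:
  fixes R :: "'a fword set"
  assumes "w \<in> words_over A"
  defines "u \<equiv> SOME u. u \<in> pres_class A R w"
  shows "u \<in> words_over A" and "pres_eq R w u"
proof -
  have "w \<in> pres_class A R w" using assms(1) by (simp add: pres_class_def pres_eq.pe_refl)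
  then have "u \<in> pres_class A R w" unfolding u_def by (rule someI)
  then show "u \<in> words_over A" "pres_eq R w u" by (simp_all add: pres_class_def)
qed

lemma pres_class_rep_respects:
  assumes "\<And>u v. pres_eq R u v \<Longrightarrow> f u = f v" and "w \<in> words_over A"
  shows "f (SOME u. u \<in> pres_class A R w) = f w"
  using assms(1)[OF pres_class_rep(2)[OF assms(2)]] by simp

lemma pres_group_simps:
  "carrier (pres_group A R) = pres_class A R ` words_over A"
  "x \<otimes>\<^bsub>pres_group A R\<^esub> y = pres_mult A R x y"
  "\<one>\<^bsub>pres_group A R\<^esub> = pres_class A R []"
  by (simp_all add: pres_group_def)

lemma pres_group_carrierI [simp]:
  "w \<in> words_over A \<Longrightarrow> pres_class A R w \<in> carrier (pres_group A R)"
  by (simp add: pres_group_simps)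

lemma pres_group_mult:
  assumes "u \<in> words_over A" "v \<in> words_over A"
  shows "pres_class A R u \<otimes>\<^bsub>pres_group A R\<^esub> pres_class A R v = pres_class A R (u @ v)"
  unfolding pres_group_simps pres_mult_def
  by (rule pres_class_eqI, rule pres_eq.pe_sym, rule pres_eq_append)
     (use pres_class_rep(2)[OF assms(1)] pres_class_rep(2)[OF assms(2)] in auto)

lemma group_pres_group: "group (pres_group A R)"
proof (rule groupI)
  fix x assume "x \<in> carrier (pres_group A R)"
  then obtain u where u: "u \<in> words_over A" "x = pres_class A R u"
    by (auto simp: pres_group_simps)
  then show "\<exists>y\<in>carrier (pres_group A R). y \<otimes>\<^bsub>pres_group A R\<^esub> x = \<one>\<^bsub>pres_group A R\<^esub>"
    using pres_class_eqI[OF pres_eq_inv_word_append]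
    by (intro bexI[of _ "pres_class A R (inv_word u)"]) (simp_all add: pres_group_mult pres_group_simps(3))
qed (auto simp: pres_group_simps(1,3) pres_group_mult)

lemma pres_group_inv:
  "w \<in> words_over A \<Longrightarrow> inv\<^bsub>pres_group A R\<^esub> (pres_class A R w) = pres_class A R (inv_word w)"
  by (rule group.inv_equality[OF group_pres_group])
     (simp_all add: pres_group_mult pres_class_eqI[OF pres_eq_inv_word_append] pres_group_simps(3))

lemma pres_group_relator:
  "r \<in> R \<Longrightarrow> pres_class A R r = \<one>\<^bsub>pres_group A R\<^esub>"
  using pres_eq.pe_rel[of r R "[]" "[]"] by (simp add: pres_group_simps pres_class_eqI)

lemma pres_group_generated:
  "carrier (pres_group A R) = generate (pres_group A R) ((\<lambda>a. pres_class A R [(a, True)]) ` A)"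
proof
  interpret group "pres_group A R" by (rule group_pres_group)
  let ?gens = "(\<lambda>a. pres_class A R [(a, True)]) ` A"
  have "pres_class A R w \<in> generate (pres_group A R) ?gens" if "w \<in> words_over A" for w
    using that
  proof (induction w)
    case Nil
    show ?case using generate.one[of "pres_group A R"] by (simp add: pres_group_simps(3))
  next
    case (Cons x w)
    obtain a b where x: "x = (a, b)" by force
    have a: "a \<in> A" and w: "w \<in> words_over A" using Cons.prems x by auto
    have "pres_class A R [x] \<in> generate (pres_group A R) ?gens"
    proof (cases b)
      case True
      then show ?thesis using a x by (auto intro: generate.incl)
    next
      case False
      have "pres_class A R [x] = inv\<^bsub>pres_group A R\<^esub> pres_class A R [(a, True)]"
        using a False by (simp add: x pres_group_inv inv_word_def)
      then show ?thesis using a by (auto intro: generate.inv)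
    qed
    moreover have "pres_class A R (x # w) = pres_class A R [x] \<otimes>\<^bsub>pres_group A R\<^esub> pres_class A R w"
      using a w x pres_group_mult[of "[x]" A w R] by simp
    ultimately show ?case using Cons.IH[OF w] by (auto intro: generate.eng)
  qed
  then show "carrier (pres_group A R) \<subseteq> generate (pres_group A R) ?gens"
    by (auto simp: pres_group_simps(1))
  show "generate (pres_group A R) ?gens \<subseteq> carrier (pres_group A R)"
    by (rule generate_incl) auto
qed

context group
begin

lemma inv_mult_cancel_left [simp]: "g \<in> carrier G \<Longrightarrow> x \<in> carrier G \<Longrightarrow> inv g \<otimes> (g \<otimes> x) = x"
  by (simp flip: m_assoc)

lemma mult_inv_cancel_left [simp]: "g \<in> carrier G \<Longrightarrow> x \<in> carrier G \<Longrightarrow> g \<otimes> (inv g \<otimes> x) = x"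
  by (simp flip: m_assoc)

lemma eq_of_mult_inv_eq_one:
  "x \<in> carrier G \<Longrightarrow> y \<in> carrier G \<Longrightarrow> x \<otimes> inv y = \<one> \<Longrightarrow> x = y"
  using inv_equality[of x "inv y"] by simp

lemma commute_mult:
  "x \<in> carrier G \<Longrightarrow> a \<in> carrier G \<Longrightarrow> b \<in> carrier G \<Longrightarrow>
   x \<otimes> a = a \<otimes> x \<Longrightarrow> x \<otimes> b = b \<otimes> x \<Longrightarrow> x \<otimes> (a \<otimes> b) = (a \<otimes> b) \<otimes> x"
  by (metis m_assoc)

definition conjg :: "'a \<Rightarrow> 'a \<Rightarrow> 'a" where
  "conjg g x = g \<otimes> x \<otimes> inv g"

lemma conjg_closed [simp]: "g \<in> carrier G \<Longrightarrow> x \<in> carrier G \<Longrightarrow> conjg g x \<in> carrier G"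
  by (simp add: conjg_def)

lemma conjg_hom: "g \<in> carrier G \<Longrightarrow> conjg g \<in> hom G G"
  by (rule homI) (simp_all add: conjg_def m_assoc)

lemma conjg_int_pow:
  "g \<in> carrier G \<Longrightarrow> x \<in> carrier G \<Longrightarrow> conjg g (x [^] (t::int)) = conjg g x [^] t"
  by (rule hom_int_pow[OF conjg_hom _ is_group is_group])

lemma conjg_inv: "g \<in> carrier G \<Longrightarrow> x \<in> carrier G \<Longrightarrow> conjg g (inv x) = inv (conjg g x)"
  by (simp add: conjg_def inv_mult_group m_assoc)

lemma conjg_mult_left:
  "g \<in> carrier G \<Longrightarrow> h \<in> carrier G \<Longrightarrow> x \<in> carrier G \<Longrightarrow> conjg (g \<otimes> h) x = conjg g (conjg h x)"
  by (simp add: conjg_def inv_mult_group m_assoc)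

lemma conjg_inv_conjg: "g \<in> carrier G \<Longrightarrow> x \<in> carrier G \<Longrightarrow> conjg (inv g) (conjg g x) = x"
  by (simp add: conjg_def m_assoc)

lemma conjg_commute: "g \<in> carrier G \<Longrightarrow> x \<in> carrier G \<Longrightarrow> g \<otimes> x = x \<otimes> g \<Longrightarrow> conjg g x = x"
  by (simp add: conjg_def m_assoc)

lemma mult_conjg_swap:
  "g \<in> carrier G \<Longrightarrow> x \<in> carrier G \<Longrightarrow> x \<otimes> g = g \<otimes> conjg (inv g) x"
  by (simp add: conjg_def m_assoc)

definition word_eval :: "('i \<Rightarrow> 'a) \<Rightarrow> 'i fword \<Rightarrow> 'a" where
  "word_eval f w = foldr (\<lambda>x g. (if snd x then f (fst x) else inv (f (fst x))) \<otimes> g) w \<one>"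

lemma word_eval_Nil [simp]: "word_eval f [] = \<one>"
  by (simp add: word_eval_def)

lemma word_eval_Cons:
  "word_eval f (x # w) = (if snd x then f (fst x) else inv (f (fst x))) \<otimes> word_eval f w"
  by (simp add: word_eval_def)

lemma word_eval_closed [simp]: "range f \<subseteq> carrier G \<Longrightarrow> word_eval f w \<in> carrier G"
  by (induction w) (auto simp: word_eval_Cons image_subset_iff)

lemma word_eval_append:
  "range f \<subseteq> carrier G \<Longrightarrow> word_eval f (u @ v) = word_eval f u \<otimes> word_eval f v"
  by (induction u) (auto simp: word_eval_Cons m_assoc image_subset_iff)

lemma word_eval_respects_pres_eq:
  assumes f: "range f \<subseteq> carrier G" and R: "\<And>r. r \<in> R \<Longrightarrow> word_eval f r = \<one>"
    and "pres_eq R u v"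
  shows "word_eval f u = word_eval f v"
  using assms(3)
proof (induction rule: pres_eq.induct)
  case (pe_cancel xs a b ys)
  have "word_eval f ((a, b) # (a, \<not> b) # ys) = word_eval f ys"
    using f by (auto simp: word_eval_Cons image_subset_iff)
  then show ?case using f by (simp add: word_eval_append)
next
  case (pe_rel r xs ys)
  then show ?case using f by (simp add: word_eval_append R)
qed auto

definition pres_lift :: "('i \<Rightarrow> 'a) \<Rightarrow> 'i fword set \<Rightarrow> 'a" where
  "pres_lift f U = word_eval f (SOME u. u \<in> U)"

context
  fixes f :: "'i \<Rightarrow> 'a" and A :: "'i set" and R :: "'i fword set"
  assumes gens_closed: "range f \<subseteq> carrier G"
    and relators_trivial: "\<And>r. r \<in> R \<Longrightarrow> word_eval f r = \<one>"
begin

lemma pres_lift_class: "w \<in> words_over A \<Longrightarrow> pres_lift f (pres_class A R w) = word_eval f w"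
  unfolding pres_lift_def
  by (rule pres_class_rep_respects[OF word_eval_respects_pres_eq[OF gens_closed relators_trivial]])

lemma pres_lift_hom: "pres_lift f \<in> hom (pres_group A R) G"
  by (rule homI)
     (auto simp: pres_group_simps(1) pres_group_mult pres_lift_class word_eval_append gens_closed)

end

definition pow_prod :: "('i \<Rightarrow> 'a) \<Rightarrow> 'i list \<Rightarrow> ('i \<Rightarrow> int) \<Rightarrow> 'a" where
  "pow_prod f L m = foldr (\<lambda>k g. f k [^] m k \<otimes> g) L \<one>"

lemma pow_prod_Nil [simp]: "pow_prod f [] m = \<one>"
  by (simp add: pow_prod_def)

lemma pow_prod_Cons: "pow_prod f (k # L) m = f k [^] m k \<otimes> pow_prod f L m"
  by (simp add: pow_prod_def)

lemma pow_prod_closed [simp]: "f ` set L \<subseteq> carrier G \<Longrightarrow> pow_prod f L m \<in> carrier G"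
  by (induction L) (auto simp: pow_prod_Cons)

lemma pow_prod_append:
  "f ` set L \<subseteq> carrier G \<Longrightarrow> f ` set M \<subseteq> carrier G \<Longrightarrow>
   pow_prod f (L @ M) m = pow_prod f L m \<otimes> pow_prod f M m"
  by (induction L) (auto simp: pow_prod_Cons m_assoc)

lemma pow_prod_cong:
  "(\<And>k. k \<in> set L \<Longrightarrow> f k = f' k) \<Longrightarrow> (\<And>k. k \<in> set L \<Longrightarrow> m k = m' k) \<Longrightarrow>
   pow_prod f L m = pow_prod f' L m'"
  by (induction L) (auto simp: pow_prod_Cons)

lemma pow_prod_zero: "f ` set L \<subseteq> carrier G \<Longrightarrow> pow_prod f L (\<lambda>_. 0) = \<one>"
  by (induction L) (auto simp: pow_prod_Cons)

end

lemma (in group_hom) hom_pow_prod: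
  "f ` set L \<subseteq> carrier G \<Longrightarrow> h (G.pow_prod f L m) = H.pow_prod (h \<circ> f) L m"
  by (induction L) (auto simp: G.pow_prod_Cons H.pow_prod_Cons hom_int_pow)

section \<open>The infinite dihedral group\<close>

text \<open>(c, b) stands for the isometry x \<mapsto> c + (-1)^b x of the integers.\<close>

definition dihedral :: "(int \<times> bool) monoid" where
  "dihedral = \<lparr>carrier = UNIV,
               monoid.mult = (\<lambda>(c, b) (d, e). (c + (if b then - d else d), b \<noteq> e)),
               one = (0, False)\<rparr>"

lemma dihedral_simps [simp]:
  "carrier dihedral = UNIV"
  "(c, b) \<otimes>\<^bsub>dihedral\<^esub> (d, e) = (c + (if b then - d else d), b \<noteq> e)"
  "\<one>\<^bsub>dihedral\<^esub> = (0, False)"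
  by (simp_all add: dihedral_def)

lemma group_dihedral: "group dihedral"
proof (rule groupI)
  fix x :: "int \<times> bool"
  show "\<exists>y\<in>carrier dihedral. y \<otimes>\<^bsub>dihedral\<^esub> x = \<one>\<^bsub>dihedral\<^esub>"
    by (cases x) (rule bexI[of _ "(if snd x then fst x else - fst x, snd x)"], auto)
qed (auto simp: dihedral_def)

interpretation dihedral: group dihedral
  by (rule group_dihedral)

lemma dihedral_translation_pow: "(c, False) [^]\<^bsub>dihedral\<^esub> (t::int) = (c * t, False)"
proof -
  have nat_pow: "(c, False) [^]\<^bsub>dihedral\<^esub> (k::nat) = (c * int k, False)" for k
    by (induction k) (simp_all add: distrib_left)
  have "inv\<^bsub>dihedral\<^esub> (d, False) = (- d, False)" for d
    by (rule dihedral.inv_equality) simp_all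
  then show ?thesis
    using nat_pow by (simp add: int_pow_def2)
qed

lemma dihedral_fix_zero_pow: "fst ((0, b) [^]\<^bsub>dihedral\<^esub> (t::int)) = 0"
proof -
  have nat_pow: "\<exists>e. (0, b) [^]\<^bsub>dihedral\<^esub> (k::nat) = (0, e)" for k
  proof (induction k)
    case (Suc k)
    then obtain e where "(0, b) [^]\<^bsub>dihedral\<^esub> k = (0, e)" by blast
    then show ?case by simp
  qed (simp add: exI[of _ False])
  have "inv\<^bsub>dihedral\<^esub> (0, e) = (0, e)" for e
    by (rule dihedral.inv_equality) simp_all
  moreover obtain e e' where "(0, b) [^]\<^bsub>dihedral\<^esub> nat (- t) = (0, e)"
    and "(0, b) [^]\<^bsub>dihedral\<^esub> nat t = (0, e')"
    using nat_pow by blast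
  ultimately show ?thesis
    by (simp add: int_pow_def2)
qed

lemma dihedral_pow_prod_translation_part:
  assumes "sorted_wrt (<) L" "f \<in> set L" "g f = (1, False)"
    and "\<And>k. k \<in> set L \<Longrightarrow> k < f \<Longrightarrow> fst (g k) = 0"
    and "\<And>k. k \<in> set L \<Longrightarrow> f < k \<Longrightarrow> g k = (0, False)"
  shows "\<bar>fst (dihedral.pow_prod g L m)\<bar> = \<bar>m f\<bar>"
  using assms
proof (induction L)
  case (Cons k L)
  show ?case
  proof (cases "k = f")
    case True
    have "dihedral.pow_prod g L m = \<one>\<^bsub>dihedral\<^esub>"
    proof -
      have "dihedral.pow_prod g L m = dihedral.pow_prod (\<lambda>_. (0, False)) L m"
        using Cons.prems True by (intro dihedral.pow_prod_cong) auto
      also have "\<dots> = \<one>\<^bsub>dihedral\<^esub>"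
        by (induction L) (simp_all add: dihedral.pow_prod_Cons flip: dihedral_simps(3))
      finally show ?thesis .
    qed
    then show ?thesis
      using True Cons.prems(3) by (simp add: dihedral.pow_prod_Cons dihedral_translation_pow)
  next
    case False
    then have "k < f" "f \<in> set L" using Cons.prems(1,2) by auto
    then obtain b where "g k [^]\<^bsub>dihedral\<^esub> m k = (0, b)"
      using Cons.prems(4) dihedral_fix_zero_pow[of "snd (g k)" "m k"] by (metis list.set_intros(1) prod.collapse)
    moreover obtain c b' where "dihedral.pow_prod g L m = (c, b')"
      by force
    moreover have "\<bar>fst (dihedral.pow_prod g L m)\<bar> = \<bar>m f\<bar>"
      using Cons \<open>f \<in> set L\<close> by simp
    ultimately show ?thesis
      by (simp add: dihedral.pow_prod_Cons)
  qed
qed simp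

lemma count_list_distinct: "distinct xs \<Longrightarrow> count_list xs x = (if x \<in> set xs then 1 else 0)"
  by (induction xs) auto

lemma phi_word_append: "phi_word C n (u @ v) k \<longleftrightarrow> phi_word C n u k \<noteq> phi_word C n v k"
  by (simp add: phi_word_def)

lemma phi_word_Nil [simp]: "phi_word C n [] k = False"
  by (simp add: phi_word_def)

lemma phi_word_Cons: "phi_word C n (x # w) k \<longleftrightarrow> lam C n (fst x) k \<noteq> phi_word C n w k"
  by (simp add: phi_word_def)

lemma phi_word_respects_pres_eq: "pres_eq (cox_rels n) u v \<Longrightarrow> phi_word C n u = phi_word C n v"
proof (induction rule: pres_eq.induct)
  case (pe_rel r xs ys)
  then show ?case by (auto simp: phi_word_append phi_word_Cons fun_eq_iff cox_rels_def)
qed (auto simp: phi_word_append phi_word_Cons fun_eq_iff)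

lemma group_Z2n: "group (Z2n n)"
proof (rule groupI)
  fix x assume "x \<in> carrier (Z2n n)"
  then show "\<exists>y\<in>carrier (Z2n n). y \<otimes>\<^bsub>Z2n n\<^esub> x = \<one>\<^bsub>Z2n n\<^esub>"
    by (intro bexI[of _ x]) (simp_all add: Z2n_def)
qed (auto simp: Z2n_def)

locale real_bott_tower =
  fixes n :: nat and C :: "nat \<Rightarrow> nat \<Rightarrow> bool"
begin

abbreviation W :: "nat fword set monoid" where "W \<equiv> cox_W n"

sublocale W: group W
  unfolding cox_W_def by (rule group_pres_group)

definition cl :: "nat fword \<Rightarrow> nat fword set" where
  "cl = pres_class {1..2*n} (cox_rels n)"

definition s :: "nat \<Rightarrow> nat fword set" where
  "s a = cl [(a, True)]"

definition sprod :: "nat list \<Rightarrow> nat fword set" where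
  "sprod L = cl (map (\<lambda>k. (k, True)) L)"

lemma W_carrier: "carrier W = cl ` words_over {1..2*n}"
  by (simp add: cl_def cox_W_def pres_group_simps)

lemma cl_closed [simp]: "w \<in> words_over {1..2*n} \<Longrightarrow> cl w \<in> carrier W"
  by (simp add: W_carrier)

lemma cl_mult:
  "u \<in> words_over {1..2*n} \<Longrightarrow> v \<in> words_over {1..2*n} \<Longrightarrow> cl u \<otimes>\<^bsub>W\<^esub> cl v = cl (u @ v)"
  by (simp add: cl_def cox_W_def pres_group_mult)

lemma cl_Nil: "cl [] = \<one>\<^bsub>W\<^esub>"
  by (simp add: cl_def cox_W_def pres_group_simps)

lemma cl_Cons:
  "fst x \<in> {1..2*n} \<Longrightarrow> w \<in> words_over {1..2*n} \<Longrightarrow> cl (x # w) = cl [x] \<otimes>\<^bsub>W\<^esub> cl w"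
  using cl_mult[of "[x]" w] by simp

lemma cl_relator: "r \<in> cox_rels n \<Longrightarrow> cl r = \<one>\<^bsub>W\<^esub>"
  by (simp add: cl_def cox_W_def pres_group_relator)

lemma s_closed [simp]: "a \<in> {1..2*n} \<Longrightarrow> s a \<in> carrier W"
  by (simp add: s_def)

lemma s_sq: "a \<in> {1..2*n} \<Longrightarrow> s a \<otimes>\<^bsub>W\<^esub> s a = \<one>\<^bsub>W\<^esub>"
  unfolding s_def by (subst cl_mult) (auto intro!: cl_relator simp: cox_rels_def)

lemma s_inv [simp]: "a \<in> {1..2*n} \<Longrightarrow> inv\<^bsub>W\<^esub> s a = s a"
  by (rule W.inv_equality) (auto simp: s_sq)

lemma s_cancel [simp]: "a \<in> {1..2*n} \<Longrightarrow> x \<in> carrier W \<Longrightarrow> s a \<otimes>\<^bsub>W\<^esub> (s a \<otimes>\<^bsub>W\<^esub> x) = x"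
  using W.inv_mult_cancel_left[of "s a" x] by simp

lemma cl_inv: "w \<in> words_over {1..2*n} \<Longrightarrow> inv\<^bsub>W\<^esub> cl w = cl (inv_word w)"
  by (simp add: cl_def cox_W_def pres_group_inv)

lemma cl_letter: "a \<in> {1..2*n} \<Longrightarrow> cl [(a, b)] = s a"
  using cl_inv[of "[(a, True)]"] s_inv[of a] by (cases b) (simp_all add: s_def)

lemma s_commute:
  assumes "a \<in> {1..2*n}" "b \<in> {1..2*n}" "a \<noteq> b + n" "b \<noteq> a + n"
  shows "s a \<otimes>\<^bsub>W\<^esub> s b = s b \<otimes>\<^bsub>W\<^esub> s a"
proof -
  have "s i \<otimes>\<^bsub>W\<^esub> s j = s j \<otimes>\<^bsub>W\<^esub> s i"
    if "i \<in> {1..2*n}" "j \<in> {1..2*n}" "i < j" "j \<noteq> i + n" for i j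
  proof -
    have "(s i \<otimes>\<^bsub>W\<^esub> s j) \<otimes>\<^bsub>W\<^esub> (s i \<otimes>\<^bsub>W\<^esub> s j) = \<one>\<^bsub>W\<^esub>"
      using that cl_relator[of "[(i, True), (j, True), (i, True), (j, True)]"]
      by (simp add: s_def cl_mult cox_rels_def)
    then have "inv\<^bsub>W\<^esub> (s i \<otimes>\<^bsub>W\<^esub> s j) = s i \<otimes>\<^bsub>W\<^esub> s j"
      using that by (intro W.inv_equality) auto
    then show ?thesis using that by (simp add: W.inv_mult_group)
  qed
  then show ?thesis
    using assms by (cases a b rule: linorder_cases) auto
qed

lemma sprod_Nil [simp]: "sprod [] = \<one>\<^bsub>W\<^esub>"
  by (simp add: sprod_def cl_Nil)

lemma sprod_closed [simp]: "set L \<subseteq> {1..2*n} \<Longrightarrow> sprod L \<in> carrier W"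
  by (simp add: sprod_def)

lemma sprod_closed_low [simp]: "set L \<subseteq> {1..n} \<Longrightarrow> sprod L \<in> carrier W"
  by (rule sprod_closed) auto

lemma sprod_append:
  "set L \<subseteq> {1..2*n} \<Longrightarrow> set M \<subseteq> {1..2*n} \<Longrightarrow> sprod (L @ M) = sprod L \<otimes>\<^bsub>W\<^esub> sprod M"
  by (simp add: sprod_def cl_mult)

lemma sprod_Cons: "a \<in> {1..2*n} \<Longrightarrow> set L \<subseteq> {1..2*n} \<Longrightarrow> sprod (a # L) = s a \<otimes>\<^bsub>W\<^esub> sprod L"
  using sprod_append[of "[a]" L] by (simp add: sprod_def s_def)

lemma sprod_snoc: "set L \<subseteq> {1..2*n} \<Longrightarrow> a \<in> {1..2*n} \<Longrightarrow> sprod (L @ [a]) = sprod L \<otimes>\<^bsub>W\<^esub> s a"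
  using sprod_append[of L "[a]"] by (simp add: sprod_def s_def)

lemma sprod_commute:
  assumes "x \<in> carrier W" "set L \<subseteq> {1..2*n}" "\<And>l. l \<in> set L \<Longrightarrow> x \<otimes>\<^bsub>W\<^esub> s l = s l \<otimes>\<^bsub>W\<^esub> x"
  shows "x \<otimes>\<^bsub>W\<^esub> sprod L = sprod L \<otimes>\<^bsub>W\<^esub> x"
  using assms(2,3)
proof (induction L)
  case (Cons a L)
  have "x \<otimes>\<^bsub>W\<^esub> sprod (a # L) = s a \<otimes>\<^bsub>W\<^esub> (x \<otimes>\<^bsub>W\<^esub> sprod L)"
    using Cons.prems assms(1) by (simp add: sprod_Cons flip: W.m_assoc)
  also have "\<dots> = sprod (a # L) \<otimes>\<^bsub>W\<^esub> x"
    using Cons assms(1) by (simp add: sprod_Cons W.m_assoc)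
  finally show ?case .
qed (use assms(1) in simp)

lemma s_sprod_commute:
  "a \<in> {1..n} \<Longrightarrow> set L \<subseteq> {1..2*n} \<Longrightarrow> (\<And>l. l \<in> set L \<Longrightarrow> l \<noteq> a + n) \<Longrightarrow>
   s a \<otimes>\<^bsub>W\<^esub> sprod L = sprod L \<otimes>\<^bsub>W\<^esub> s a"
  by (intro sprod_commute s_commute) auto

lemma s_high_sprod_commute:
  "a \<in> {1..n} \<Longrightarrow> set L \<subseteq> {1..2*n} \<Longrightarrow> (\<And>l. l \<in> set L \<Longrightarrow> l \<noteq> a) \<Longrightarrow>
   s (n + a) \<otimes>\<^bsub>W\<^esub> sprod L = sprod L \<otimes>\<^bsub>W\<^esub> s (n + a)"
  by (intro sprod_commute s_commute) auto

lemma sprod_sq: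
  assumes "set L \<subseteq> {1..n}"
  shows "sprod L \<otimes>\<^bsub>W\<^esub> sprod L = \<one>\<^bsub>W\<^esub>"
  using assms
proof (induction L)
  case (Cons a L)
  have a: "a \<in> {1..n}" and L: "set L \<subseteq> {1..2*n}" using Cons.prems by auto
  have "sprod (a # L) \<otimes>\<^bsub>W\<^esub> sprod (a # L) = s a \<otimes>\<^bsub>W\<^esub> (sprod L \<otimes>\<^bsub>W\<^esub> s a) \<otimes>\<^bsub>W\<^esub> sprod L"
    using a L by (simp add: sprod_Cons W.m_assoc)
  also have "\<dots> = s a \<otimes>\<^bsub>W\<^esub> (s a \<otimes>\<^bsub>W\<^esub> sprod L) \<otimes>\<^bsub>W\<^esub> sprod L"
    using Cons.prems by (subst s_sprod_commute) auto
  also have "\<dots> = sprod L \<otimes>\<^bsub>W\<^esub> sprod L"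
    using a L by (simp add: W.m_assoc)
  finally show ?case using Cons by simp
qed simp

lemma sprod_inv: "set L \<subseteq> {1..n} \<Longrightarrow> inv\<^bsub>W\<^esub> sprod L = sprod L"
  by (rule W.inv_equality) (auto simp: sprod_sq)

definition row :: "nat \<Rightarrow> nat list" where
  "row i = filter (C i) [i + 1..<n + 1]"

lemma set_row: "set (row i) = {k. i < k \<and> k \<le> n \<and> C i k}"
  by (auto simp: row_def)

text \<open>The simplifier rewrites 1 to Suc 0 inside intervals, so these facts are stored in that form.\<close>

lemma set_row_subset [simplified, simp]: "set (row i) \<subseteq> {1..n}" "set (row i) \<subseteq> {1..2*n}"
  by (auto simp: row_def)

lemma distinct_row: "distinct (row i)"
  by (simp add: row_def)

text \<open>alpha i is the element written alpha_{n+i} in the paper.\<close>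

definition alpha :: "nat \<Rightarrow> nat fword set" where
  "alpha i = cl (alpha_word C n (n + i))"

lemma alpha_word_eq:
  "alpha_word C n (n + i) = [(n + i, True), (i, True)] @ map (\<lambda>k. (k, True)) (row i)"
  by (simp add: alpha_word_def row_def)

lemma alpha_word_words: "i \<in> {1..n} \<Longrightarrow> alpha_word C n (n + i) \<in> words_over {1..2*n}"
  by (simp add: alpha_word_eq)

lemma alpha_eq: "i \<in> {1..n} \<Longrightarrow> alpha i = s (n + i) \<otimes>\<^bsub>W\<^esub> s i \<otimes>\<^bsub>W\<^esub> sprod (row i)"
  using cl_Cons[of "(n + i, True)" "(i, True) # map (\<lambda>k. (k, True)) (row i)"]
    cl_Cons[of "(i, True)" "map (\<lambda>k. (k, True)) (row i)"]
  by (simp add: alpha_def alpha_word_eq s_def sprod_def W.m_assoc)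

lemma alpha_closed [simp]: "i \<in> {1..n} \<Longrightarrow> alpha i \<in> carrier W"
  using alpha_word_words[of i] by (simp add: alpha_def)

lemma row_commute_low:
  "i \<in> {1..n} \<Longrightarrow> k \<in> {1..n} \<Longrightarrow> s k \<otimes>\<^bsub>W\<^esub> sprod (row i) = sprod (row i) \<otimes>\<^bsub>W\<^esub> s k"
  by (rule s_sprod_commute) (auto simp: set_row)

lemma row_commute_high:
  "i \<in> {1..n} \<Longrightarrow> k \<in> {1..i} \<Longrightarrow> s (n + k) \<otimes>\<^bsub>W\<^esub> sprod (row i) = sprod (row i) \<otimes>\<^bsub>W\<^esub> s (n + k)"
  by (rule s_high_sprod_commute) (auto simp: set_row)

text \<open>Both sides equal s_i s_{n+i} \<sigma>, where \<sigma> = sprod (row i) commutes with s_i and s_{n+i}.\<close>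

lemma conjg_s_alpha_self:
  assumes i: "i \<in> {1..n}"
  shows "W.conjg (s i) (alpha i) = inv\<^bsub>W\<^esub> alpha i"
proof -
  let ?t = "s (n + i)" and ?\<sigma> = "sprod (row i)"
  have closed: "s i \<in> carrier W" "?t \<in> carrier W" "?\<sigma> \<in> carrier W"
    using i by auto
  have c1: "s i \<otimes>\<^bsub>W\<^esub> ?\<sigma> = ?\<sigma> \<otimes>\<^bsub>W\<^esub> s i" and c2: "?t \<otimes>\<^bsub>W\<^esub> ?\<sigma> = ?\<sigma> \<otimes>\<^bsub>W\<^esub> ?t"
    using i by (auto intro!: row_commute_low row_commute_high simp del: One_nat_def)
  have "W.conjg (s i) (alpha i) = s i \<otimes>\<^bsub>W\<^esub> (?t \<otimes>\<^bsub>W\<^esub> (s i \<otimes>\<^bsub>W\<^esub> (?\<sigma> \<otimes>\<^bsub>W\<^esub> s i)))"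
    using i closed by (simp add: W.conjg_def alpha_eq W.m_assoc)
  also have "\<dots> = s i \<otimes>\<^bsub>W\<^esub> ?t \<otimes>\<^bsub>W\<^esub> ?\<sigma>"
    using i closed by (simp add: W.m_assoc flip: c1)
  also have "\<dots> = s i \<otimes>\<^bsub>W\<^esub> ?\<sigma> \<otimes>\<^bsub>W\<^esub> ?t"
    using closed by (simp add: W.m_assoc c2)
  also have "\<dots> = ?\<sigma> \<otimes>\<^bsub>W\<^esub> s i \<otimes>\<^bsub>W\<^esub> ?t"
    by (simp only: c1)
  also have "\<dots> = inv\<^bsub>W\<^esub> alpha i"
    using i closed by (simp add: alpha_eq W.inv_mult_group sprod_inv W.m_assoc)
  finally show ?thesis .
qed

lemma conjg_s_alpha:
  assumes k: "k \<in> {1..n}" and i: "i \<in> {1..n}"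
  shows "W.conjg (s k) (alpha i) = (if k = i then inv\<^bsub>W\<^esub> alpha i else alpha i)"
proof (cases "k = i")
  case False
  have "s k \<otimes>\<^bsub>W\<^esub> s (n + i) = s (n + i) \<otimes>\<^bsub>W\<^esub> s k"
    using k i False by (intro s_commute) auto
  moreover have "s k \<otimes>\<^bsub>W\<^esub> s i = s i \<otimes>\<^bsub>W\<^esub> s k"
    using k i False by (intro s_commute) auto
  moreover have "s k \<otimes>\<^bsub>W\<^esub> sprod (row i) = sprod (row i) \<otimes>\<^bsub>W\<^esub> s k"
    by (rule row_commute_low[OF i k])
  ultimately have "s k \<otimes>\<^bsub>W\<^esub> alpha i = alpha i \<otimes>\<^bsub>W\<^esub> s k"
    unfolding alpha_eq[OF i] using k i by (intro W.commute_mult) auto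
  then show ?thesis
    using False k i by (simp add: W.conjg_commute)
qed (simp add: conjg_s_alpha_self[OF i])

lemma conjg_s_high_alpha:
  assumes i: "i \<in> {1..n}" and j: "j \<in> {1..n}" and "i < j"
  shows "W.conjg (s (n + i)) (alpha j) = alpha j"
proof -
  have "s (n + i) \<otimes>\<^bsub>W\<^esub> s (n + j) = s (n + j) \<otimes>\<^bsub>W\<^esub> s (n + i)"
    using assms by (intro s_commute) auto
  moreover have "s (n + i) \<otimes>\<^bsub>W\<^esub> s j = s j \<otimes>\<^bsub>W\<^esub> s (n + i)"
    using assms by (intro s_commute) auto
  moreover have "s (n + i) \<otimes>\<^bsub>W\<^esub> sprod (row j) = sprod (row j) \<otimes>\<^bsub>W\<^esub> s (n + i)"
    using assms by (intro row_commute_high) auto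
  ultimately have "s (n + i) \<otimes>\<^bsub>W\<^esub> alpha j = alpha j \<otimes>\<^bsub>W\<^esub> s (n + i)"
    unfolding alpha_eq[OF j] using i j by (intro W.commute_mult) auto
  then show ?thesis
    using i j by (simp add: W.conjg_commute)
qed

lemma conjg_sprod_alpha:
  assumes "set L \<subseteq> {1..n}" and j: "j \<in> {1..n}"
  shows "W.conjg (sprod L) (alpha j) = (if odd (count_list L j) then inv\<^bsub>W\<^esub> alpha j else alpha j)"
  using assms(1)
proof (induction L)
  case (Cons a L)
  have a: "a \<in> {1..n}" and L: "set L \<subseteq> {1..n}" "set L \<subseteq> {1..2*n}"
    using Cons.prems by auto
  have "W.conjg (sprod (a # L)) (alpha j) = W.conjg (s a) (W.conjg (sprod L) (alpha j))"
    using a L j by (simp add: sprod_Cons W.conjg_mult_left)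
  then show ?case
    using Cons.IH[OF L(1)] a j by (auto simp: W.conjg_inv conjg_s_alpha)
qed (use j in \<open>simp add: W.conjg_def\<close>)

lemma conjg_alpha_alpha:
  assumes i: "i \<in> {1..n}" and j: "j \<in> {1..n}" and "i < j"
  shows "W.conjg (alpha i) (alpha j) = (if C i j then inv\<^bsub>W\<^esub> alpha j else alpha j)"
proof -
  have "count_list (row i) j = (if C i j then 1 else 0)"
    using assms by (simp add: count_list_distinct distinct_row set_row)
  moreover have "W.conjg (alpha i) (alpha j) =
      W.conjg (s (n + i)) (W.conjg (s i) (W.conjg (sprod (row i)) (alpha j)))"
    unfolding alpha_eq[OF i] using i j by (simp add: W.conjg_mult_left)
  ultimately show ?thesis
    using assms by (simp add: conjg_sprod_alpha W.conjg_inv conjg_s_alpha conjg_s_high_alpha)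
qed

section \<open>The alpha_i generate the kernel of phi\<close>

definition coset_rep :: "(nat \<Rightarrow> bool) \<Rightarrow> nat fword set" where
  "coset_rep p = sprod (filter p [1..<n + 1])"

lemma coset_rep_closed [simp]: "coset_rep p \<in> carrier W"
  unfolding coset_rep_def by (rule sprod_closed_low) auto

lemma sprod_filter_mult_s:
  assumes "distinct M" "set M \<subseteq> {1..n}" "a \<in> set M"
  shows "sprod (filter p M) \<otimes>\<^bsub>W\<^esub> s a = sprod (filter (p(a := \<not> p a)) M)"
  using assms
proof (induction M)
  case (Cons b M)
  have a: "a \<in> {1..n}" and M: "set M \<subseteq> {1..n}" "set M \<subseteq> {1..2*n}" using Cons.prems by auto
  have F: "set (filter q M) \<subseteq> {1..2*n}" for q
    using M by auto
  have comm: "s a \<otimes>\<^bsub>W\<^esub> sprod (filter q M) = sprod (filter q M) \<otimes>\<^bsub>W\<^esub> s a" for q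
    using a M by (intro s_sprod_commute) auto
  show ?case
  proof (cases "b = a")
    case True
    then have filter_M: "filter (p(a := \<not> p a)) M = filter p M"
      using Cons.prems by (intro filter_cong) auto
    show ?thesis
    proof (cases "p a")
      case True
      have "sprod (a # filter p M) \<otimes>\<^bsub>W\<^esub> s a = s a \<otimes>\<^bsub>W\<^esub> (sprod (filter p M) \<otimes>\<^bsub>W\<^esub> s a)"
        using a F by (simp add: sprod_Cons W.m_assoc)
      also have "\<dots> = s a \<otimes>\<^bsub>W\<^esub> (s a \<otimes>\<^bsub>W\<^esub> sprod (filter p M))"
        by (simp only: comm)
      finally show ?thesis
        using True \<open>b = a\<close> a F filter_M by (simp add: fun_upd_same del: fun_upd_apply)
    next
      case False
      then show ?thesis
        using \<open>b = a\<close> a F filter_M by (simp add: sprod_Cons comm fun_upd_same del: fun_upd_apply)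
    qed
  next
    case False
    then show ?thesis
      using Cons a F by (simp add: sprod_Cons W.m_assoc fun_upd_other del: fun_upd_apply)
  qed
qed simp

lemma coset_rep_mult_s: "a \<in> {1..n} \<Longrightarrow> coset_rep p \<otimes>\<^bsub>W\<^esub> s a = coset_rep (p(a := \<not> p a))"
  unfolding coset_rep_def by (rule sprod_filter_mult_s) auto

lemma coset_rep_mult_sprod: "set L \<subseteq> {1..n} \<Longrightarrow> \<exists>q. coset_rep p \<otimes>\<^bsub>W\<^esub> sprod L = coset_rep q"
proof (induction L arbitrary: p)
  case (Cons a L)
  have a: "a \<in> {1..n}" and L: "set L \<subseteq> {1..n}" "set L \<subseteq> {1..2*n}" using Cons.prems by auto
  have "coset_rep p \<otimes>\<^bsub>W\<^esub> sprod (a # L) = coset_rep (p(a := \<not> p a)) \<otimes>\<^bsub>W\<^esub> sprod L"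
    using a L by (simp add: sprod_Cons coset_rep_mult_s flip: W.m_assoc)
  then show ?case using Cons.IH[OF L(1)] by metis
qed auto

abbreviation H :: "nat fword set set" where
  "H \<equiv> generate W (alpha ` {1..n})"

lemma alpha_in_H: "i \<in> {1..n} \<Longrightarrow> alpha i \<in> H"
  by (rule generate.incl) simp

lemma inv_alpha_in_H: "i \<in> {1..n} \<Longrightarrow> inv\<^bsub>W\<^esub> alpha i \<in> H"
  by (rule generate.inv) simp

lemma H_subset: "H \<subseteq> carrier W"
  by (rule W.generate_incl) auto

lemma s_high_eq:
  assumes i: "i \<in> {1..n}"
  shows "s (n + i) = alpha i \<otimes>\<^bsub>W\<^esub> sprod (row i @ [i])"
proof -
  have "alpha i \<otimes>\<^bsub>W\<^esub> sprod (row i @ [i])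
      = s (n + i) \<otimes>\<^bsub>W\<^esub> (s i \<otimes>\<^bsub>W\<^esub> ((sprod (row i) \<otimes>\<^bsub>W\<^esub> sprod (row i)) \<otimes>\<^bsub>W\<^esub> s i))"
    using i by (simp add: alpha_eq sprod_snoc W.m_assoc)
  then show ?thesis
    using i s_sq[of i] by (simp add: sprod_sq)
qed

lemma conjg_coset_rep_alpha_in_H:
  assumes i: "i \<in> {1..n}"
  shows "W.conjg (coset_rep p) (alpha i) \<in> H"
  unfolding coset_rep_def
  using alpha_in_H[OF i] inv_alpha_in_H[OF i] by (subst conjg_sprod_alpha[OF _ i]) auto

lemma coset_rep_mult_s_decomp:
  assumes a: "a \<in> {1..2*n}"
  shows "\<exists>h\<in>H. \<exists>q. coset_rep p \<otimes>\<^bsub>W\<^esub> s a = h \<otimes>\<^bsub>W\<^esub> coset_rep q"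
proof (cases "a \<le> n")
  case True
  then have "coset_rep p \<otimes>\<^bsub>W\<^esub> s a = \<one>\<^bsub>W\<^esub> \<otimes>\<^bsub>W\<^esub> coset_rep (p(a := \<not> p a))"
    using a by (simp add: coset_rep_mult_s)
  then show ?thesis using generate.one by blast
next
  case False
  define i where "i = a - n"
  have i: "i \<in> {1..n}" and ai: "a = n + i" using False a by (auto simp: i_def)
  obtain q where q: "coset_rep p \<otimes>\<^bsub>W\<^esub> sprod (row i @ [i]) = coset_rep q"
    using coset_rep_mult_sprod[of "row i @ [i]" p] i by auto
  have "coset_rep p \<otimes>\<^bsub>W\<^esub> s a
      = W.conjg (coset_rep p) (alpha i) \<otimes>\<^bsub>W\<^esub> (coset_rep p \<otimes>\<^bsub>W\<^esub> sprod (row i @ [i]))"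
    using i by (simp add: ai s_high_eq W.conjg_def W.m_assoc)
  then show ?thesis
    using q conjg_coset_rep_alpha_in_H[OF i] by auto
qed

lemma H_coset_rep_decomp:
  assumes "x \<in> carrier W"
  shows "\<exists>h\<in>H. \<exists>p. x = h \<otimes>\<^bsub>W\<^esub> coset_rep p"
proof -
  obtain w where w: "w \<in> words_over {1..2*n}" "x = cl w"
    using assms by (auto simp: W_carrier)
  have "\<exists>h\<in>H. \<exists>p. cl w = h \<otimes>\<^bsub>W\<^esub> coset_rep p"
    using w(1)
  proof (induction w rule: rev_induct)
    case Nil
    have "cl [] = \<one>\<^bsub>W\<^esub> \<otimes>\<^bsub>W\<^esub> coset_rep (\<lambda>_. False)"
      by (simp add: cl_Nil coset_rep_def)
    then show ?case using generate.one by blast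
  next
    case (snoc x w)
    obtain a b where x: "x = (a, b)" by force
    have a: "a \<in> {1..2*n}" and w: "w \<in> words_over {1..2*n}" using snoc.prems x by auto
    obtain h p where h: "h \<in> H" and hp: "cl w = h \<otimes>\<^bsub>W\<^esub> coset_rep p"
      using snoc.IH[OF w] by blast
    obtain h' q where h': "h' \<in> H" and hq: "coset_rep p \<otimes>\<^bsub>W\<^esub> s a = h' \<otimes>\<^bsub>W\<^esub> coset_rep q"
      using coset_rep_mult_s_decomp[OF a] by blast
    have "h \<in> carrier W" "h' \<in> carrier W" using h h' H_subset by auto
    then have "cl (w @ [x]) = (h \<otimes>\<^bsub>W\<^esub> h') \<otimes>\<^bsub>W\<^esub> coset_rep q"
      using a w hp hq by (simp add: x cl_letter W.m_assoc flip: cl_mult)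
    moreover have "h \<otimes>\<^bsub>W\<^esub> h' \<in> H"
      using h h' by (rule generate.eng)
    ultimately show ?case by blast
  qed
  then show ?thesis using w(2) by blast
qed

lemma phi_cl: "w \<in> words_over {1..2*n} \<Longrightarrow> phi C n (cl w) = phi_word C n w"
  unfolding phi_def cl_def by (rule pres_class_rep_respects[OF phi_word_respects_pres_eq])

lemma phi_word_closed: "w \<in> words_over {1..2*n} \<Longrightarrow> phi_word C n w \<in> carrier (Z2n n)"
proof (induction w)
  case (Cons x w)
  have "w \<in> words_over {1..2*n}" using Cons.prems by simp
  then have "\<forall>k. phi_word C n w k \<longrightarrow> k \<in> {1..n}"
    using Cons.IH unfolding Z2n_def by simp
  moreover have "lam C n (fst x) k \<Longrightarrow> k \<in> {1..n}" for k
    using Cons.prems by (auto simp: lam_def split: if_splits)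
  ultimately show ?case
    unfolding Z2n_def partial_object.simps mem_Collect_eq phi_word_Cons by blast
qed (simp add: Z2n_def phi_word_def)

lemma phi_hom: "phi C n \<in> hom W (Z2n n)"
proof (rule homI)
  fix x assume "x \<in> carrier W"
  then obtain w where "w \<in> words_over {1..2*n}" "x = cl w" by (auto simp: W_carrier)
  then show "phi C n x \<in> carrier (Z2n n)" by (simp add: phi_cl phi_word_closed)
next
  fix x y assume "x \<in> carrier W" "y \<in> carrier W"
  then obtain u v where "u \<in> words_over {1..2*n}" "x = cl u" "v \<in> words_over {1..2*n}" "y = cl v"
    by (auto simp: W_carrier)
  then show "phi C n (x \<otimes>\<^bsub>W\<^esub> y) = phi C n x \<otimes>\<^bsub>Z2n n\<^esub> phi C n y"
    by (simp add: cl_mult phi_cl Z2n_def phi_word_append fun_eq_iff)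
qed

abbreviation K :: "nat fword set set" where
  "K \<equiv> kernel W (Z2n n) (phi C n)"

lemma phi_word_letters:
  "phi_word C n (map (\<lambda>k. (k, True)) L) k \<longleftrightarrow> odd (count_list L k)" if "set L \<subseteq> {1..n}"
  using that by (induction L) (auto simp: phi_word_Cons lam_def)

lemma phi_alpha:
  assumes i: "i \<in> {1..n}"
  shows "phi C n (alpha i) = (\<lambda>_. False)"
proof
  fix k
  have "phi C n (alpha i) k \<longleftrightarrow> lam C n (n + i) k \<noteq> (lam C n i k \<noteq> (k \<in> set (row i)))"
    using i alpha_word_words[OF i]
    by (simp add: alpha_def phi_cl alpha_word_eq phi_word_append phi_word_Cons phi_word_letters
        count_list_distinct distinct_row)
  then show "phi C n (alpha i) k = False"
    using i by (auto simp: lam_def set_row)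
qed

lemma phi_coset_rep:
  assumes "k \<in> {1..n}"
  shows "phi C n (coset_rep p) k = p k"
proof -
  have "set (filter p [1..<n + 1]) \<subseteq> {1..n}" by auto
  then show ?thesis
    using assms unfolding coset_rep_def sprod_def
    by (subst phi_cl) (auto simp: phi_word_letters count_list_distinct simp del: upt_Suc)
qed

lemma H_subset_kernel: "H \<subseteq> K"
proof -
  have "alpha ` {1..n} \<subseteq> K"
    using phi_alpha by (auto simp: kernel_def Z2n_def)
  then show ?thesis
    by (rule W.generate_subgroup_incl[OF _ group_hom.subgroup_kernel])
       (simp add: group_hom_def group_hom_axioms_def group_Z2n phi_hom W.is_group)
qed

lemma H_eq_kernel: "H = K"
proof
  show "H \<subseteq> K" by (rule H_subset_kernel)
next
  show "K \<subseteq> H"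
  proof
    fix x assume x: "x \<in> K"
    then have xc: "x \<in> carrier W" and px: "phi C n x = (\<lambda>_. False)"
      by (auto simp: kernel_def Z2n_def)
    obtain h p where h: "h \<in> H" and hp: "x = h \<otimes>\<^bsub>W\<^esub> coset_rep p"
      using H_coset_rep_decomp[OF xc] by blast
    have hc: "h \<in> carrier W" using h H_subset by auto
    have "phi C n h = (\<lambda>_. False)" using h H_subset_kernel by (auto simp: kernel_def Z2n_def)
    moreover have "phi C n x = phi C n h \<otimes>\<^bsub>Z2n n\<^esub> phi C n (coset_rep p)"
      using hp hc phi_hom by (simp add: hom_mult)
    ultimately have "p k = False" if "k \<in> {1..n}" for k
      using px phi_coset_rep[OF that, of p] by (simp add: Z2n_def fun_eq_iff)
    then have "coset_rep p = \<one>\<^bsub>W\<^esub>"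
      by (simp add: coset_rep_def filter_False del: upt_Suc)
    then show "x \<in> H" using hp hc h by simp
  qed
qed

section \<open>The presented group and its normal form\<close>

text \<open>A named index set, so that the simplifier does not rewrite n + 1 to Suc n inside it.\<close>

definition PA :: "nat set" where
  "PA = {n+1..2*n}"

lemma PA_iff [simp]: "j \<in> PA \<longleftrightarrow> n < j \<and> j \<le> 2*n"
  by (auto simp: PA_def)

lemma PA_eq_image: "PA = (\<lambda>i. n + i) ` {1..n}"
  by (auto simp: image_iff intro!: bexI[of _ "j - n" for j])

abbreviation P :: "nat fword set monoid" where
  "P \<equiv> pres_group PA (bott_rels C n)"

sublocale P: group P
  by (rule group_pres_group)

definition pc :: "nat fword \<Rightarrow> nat fword set" where
  "pc = pres_class PA (bott_rels C n)"

text \<open>gen i is the generator alpha_{n+i} of the presented group.\<close>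

definition gen :: "nat \<Rightarrow> nat fword set" where
  "gen i = pc [(n + i, True)]"

lemma P_carrier: "carrier P = pc ` words_over PA"
  by (simp add: pc_def pres_group_simps)

lemma pc_mult: "u \<in> words_over PA \<Longrightarrow> v \<in> words_over PA \<Longrightarrow> pc u \<otimes>\<^bsub>P\<^esub> pc v = pc (u @ v)"
  by (simp add: pc_def pres_group_mult)

lemma gen_closed [simp]: "i \<in> {1..n} \<Longrightarrow> gen i \<in> carrier P"
  by (simp add: gen_def pc_def)

lemma pc_letter: "i \<in> {1..n} \<Longrightarrow> pc [(n + i, b)] = (if b then gen i else inv\<^bsub>P\<^esub> gen i)"
  using pres_group_inv[of "[(n + i, True)]" PA "bott_rels C n"]
  by (simp add: gen_def pc_def)

definition csign :: "nat \<Rightarrow> nat \<Rightarrow> int" where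
  "csign i k = (if C i k then -1 else 1)"

lemma conjg_gen_gen:
  assumes i: "i \<in> {1..n}" and k: "k \<in> {1..n}" and "i < k"
  shows "P.conjg (gen i) (gen k) = gen k [^]\<^bsub>P\<^esub> csign i k"
proof -
  have "x_rel C n (n + i) (n + k) \<in> bott_rels C n"
    using assms unfolding bott_rels_def by force
  moreover have "x_rel C n (n + i) (n + k) = [(n + i, True), (n + k, \<not> C i k), (n + i, False), (n + k, False)]"
    by (simp add: x_rel_def)
  ultimately have "\<one>\<^bsub>P\<^esub> = pc [(n + i, True), (n + k, \<not> C i k), (n + i, False), (n + k, False)]"
    by (simp add: pc_def pres_group_relator)
  also have "\<dots> = pc [(n + i, True)] \<otimes>\<^bsub>P\<^esub> pc [(n + k, \<not> C i k)] \<otimes>\<^bsub>P\<^esub> pc [(n + i, False)]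
      \<otimes>\<^bsub>P\<^esub> pc [(n + k, False)]"
    using i k by (simp add: pc_mult)
  also have "\<dots> = P.conjg (gen i) (if C i k then inv\<^bsub>P\<^esub> gen k else gen k) \<otimes>\<^bsub>P\<^esub> inv\<^bsub>P\<^esub> gen k"
    using i k by (simp only: pc_letter P.conjg_def) simp
  finally have "P.conjg (gen i) (if C i k then inv\<^bsub>P\<^esub> gen k else gen k) \<otimes>\<^bsub>P\<^esub> inv\<^bsub>P\<^esub> gen k = \<one>\<^bsub>P\<^esub>"
    by (rule sym)
  then have conj: "P.conjg (gen i) (if C i k then inv\<^bsub>P\<^esub> gen k else gen k) = gen k"
    by (rule P.eq_of_mult_inv_eq_one[rotated 2]) (use i k in simp_all)
  show ?thesis
  proof (cases "C i k")
    case True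
    with conj have "inv\<^bsub>P\<^esub> P.conjg (gen i) (gen k) = gen k"
      using i k by (simp add: P.conjg_inv)
    then have "P.conjg (gen i) (gen k) = inv\<^bsub>P\<^esub> gen k"
      using i k by (metis P.conjg_closed P.inv_inv gen_closed)
    then show ?thesis
      using True i k by (simp add: csign_def P.int_pow_neg)
  next
    case False
    with conj show ?thesis
      using k by (simp add: csign_def)
  qed
qed

lemma conjg_gen_pow_gen:
  fixes e :: int
  assumes i: "i \<in> {1..n}" and k: "k \<in> {1..n}" and "i < k" and e: "e \<in> {1, -1}"
  shows "P.conjg (gen i [^]\<^bsub>P\<^esub> e) (gen k) = gen k [^]\<^bsub>P\<^esub> csign i k"
proof -
  let ?c = "P.conjg (inv\<^bsub>P\<^esub> gen i) (gen k)"
  have sq: "csign i k * csign i k = 1" by (simp add: csign_def)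
  have "gen k = P.conjg (inv\<^bsub>P\<^esub> gen i) (P.conjg (gen i) (gen k))"
    using i k by (simp add: P.conjg_inv_conjg)
  also have "\<dots> = P.conjg (inv\<^bsub>P\<^esub> gen i) (gen k [^]\<^bsub>P\<^esub> csign i k)"
    by (simp only: conjg_gen_gen[OF assms(1-3)])
  also have "\<dots> = ?c [^]\<^bsub>P\<^esub> csign i k"
    using i k by (simp add: P.conjg_int_pow)
  finally have "gen k [^]\<^bsub>P\<^esub> csign i k = (?c [^]\<^bsub>P\<^esub> csign i k) [^]\<^bsub>P\<^esub> csign i k"
    by simp
  also have "\<dots> = ?c"
    using i k sq by (simp add: P.int_pow_pow)
  finally have inv_case: "P.conjg (inv\<^bsub>P\<^esub> gen i) (gen k) = gen k [^]\<^bsub>P\<^esub> csign i k" ..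
  have "gen i [^]\<^bsub>P\<^esub> e = (if e = 1 then gen i else inv\<^bsub>P\<^esub> gen i)"
    using e P.int_pow_neg[OF gen_closed[OF i], of 1] i by auto
  then show ?thesis
    using inv_case conjg_gen_gen[OF assms(1-3)] by simp
qed

lemma gen_pow_swap:
  fixes e :: int
  assumes i: "i \<in> {1..n}" and k: "k \<in> {1..n}" and "i < k" and e: "e \<in> {1, -1}"
  shows "gen k [^]\<^bsub>P\<^esub> (t::int) \<otimes>\<^bsub>P\<^esub> gen i [^]\<^bsub>P\<^esub> e
       = gen i [^]\<^bsub>P\<^esub> e \<otimes>\<^bsub>P\<^esub> gen k [^]\<^bsub>P\<^esub> (csign i k * t)"
proof -
  have inv_pow: "inv\<^bsub>P\<^esub> (gen i [^]\<^bsub>P\<^esub> e) = gen i [^]\<^bsub>P\<^esub> (- e)"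
    using P.int_pow_neg[OF gen_closed[OF i], of e] by simp
  have "P.conjg (gen i [^]\<^bsub>P\<^esub> (- e)) (gen k) = gen k [^]\<^bsub>P\<^esub> csign i k"
    by (rule conjg_gen_pow_gen[OF i k \<open>i < k\<close>]) (use e in auto)
  then have "P.conjg (inv\<^bsub>P\<^esub> (gen i [^]\<^bsub>P\<^esub> e)) (gen k [^]\<^bsub>P\<^esub> t) = gen k [^]\<^bsub>P\<^esub> (csign i k * t)"
    unfolding inv_pow using i k by (simp add: P.conjg_int_pow P.int_pow_pow)
  moreover have "gen k [^]\<^bsub>P\<^esub> t \<otimes>\<^bsub>P\<^esub> gen i [^]\<^bsub>P\<^esub> e
      = gen i [^]\<^bsub>P\<^esub> e \<otimes>\<^bsub>P\<^esub> P.conjg (inv\<^bsub>P\<^esub> (gen i [^]\<^bsub>P\<^esub> e)) (gen k [^]\<^bsub>P\<^esub> t)"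
    using i k by (intro P.mult_conjg_swap) simp_all
  ultimately show ?thesis
    by simp
qed

lemma pow_prod_mult_gen_pow:
  fixes e :: int
  assumes "distinct L" "set L \<subseteq> {i+1..n}" "i \<in> {1..n}" "e \<in> {1, -1}"
  shows "\<exists>m'. P.pow_prod gen L m \<otimes>\<^bsub>P\<^esub> gen i [^]\<^bsub>P\<^esub> e = gen i [^]\<^bsub>P\<^esub> e \<otimes>\<^bsub>P\<^esub> P.pow_prod gen L m'"
  using assms(1,2)
proof (induction L arbitrary: m)
  case (Cons k L)
  have k: "k \<in> {1..n}" "i < k" and L: "gen ` set L \<subseteq> carrier P" and kL: "k \<notin> set L"
    using Cons.prems by auto
  have "\<exists>m'. P.pow_prod gen L m \<otimes>\<^bsub>P\<^esub> gen i [^]\<^bsub>P\<^esub> e = gen i [^]\<^bsub>P\<^esub> e \<otimes>\<^bsub>P\<^esub> P.pow_prod gen L m'"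
    using Cons.IH Cons.prems by simp
  then obtain m' where m': "P.pow_prod gen L m \<otimes>\<^bsub>P\<^esub> gen i [^]\<^bsub>P\<^esub> e = gen i [^]\<^bsub>P\<^esub> e \<otimes>\<^bsub>P\<^esub> P.pow_prod gen L m'"
    by blast
  define m'' where "m'' = m'(k := csign i k * m k)"
  have "P.pow_prod gen L m'' = P.pow_prod gen L m'"
    using kL by (intro P.pow_prod_cong) (auto simp: m''_def)
  have "P.pow_prod gen (k # L) m \<otimes>\<^bsub>P\<^esub> gen i [^]\<^bsub>P\<^esub> e
      = gen k [^]\<^bsub>P\<^esub> m k \<otimes>\<^bsub>P\<^esub> (P.pow_prod gen L m \<otimes>\<^bsub>P\<^esub> gen i [^]\<^bsub>P\<^esub> e)"
    using k L assms(3) by (simp add: P.pow_prod_Cons P.m_assoc)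
  also have "\<dots> = (gen k [^]\<^bsub>P\<^esub> m k \<otimes>\<^bsub>P\<^esub> gen i [^]\<^bsub>P\<^esub> e) \<otimes>\<^bsub>P\<^esub> P.pow_prod gen L m'"
    using k L assms(3) by (simp add: m' P.m_assoc)
  also have "\<dots> = gen i [^]\<^bsub>P\<^esub> e \<otimes>\<^bsub>P\<^esub> P.pow_prod gen (k # L) m''"
    using k L assms(3,4) \<open>P.pow_prod gen L m'' = P.pow_prod gen L m'\<close>
    by (simp add: gen_pow_swap P.pow_prod_Cons m''_def P.m_assoc)
  finally show ?case by blast
qed (use assms(3) in simp)

lemma pow_prod_gen_split:
  assumes i: "i \<in> {1..n}"
  shows "P.pow_prod gen [1..<n + 1] m
       = P.pow_prod gen [1..<i] m \<otimes>\<^bsub>P\<^esub> (gen i [^]\<^bsub>P\<^esub> m i \<otimes>\<^bsub>P\<^esub> P.pow_prod gen [i + 1..<n + 1] m)"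
proof -
  have "[1..<n + 1] = [1..<i] @ [i..<n + 1]"
    using i upt_add_eq_append[of 1 i "n + 1 - i"] by auto
  also have "[i..<n + 1] = i # [i + 1..<n + 1]"
    using i upt_conv_Cons[of i "n + 1"] by (simp del: upt_Suc)
  finally have "[1..<n + 1] = [1..<i] @ i # [i + 1..<n + 1]" .
  then show ?thesis
    using i by (simp add: P.pow_prod_append P.pow_prod_Cons image_subset_iff del: upt_Suc)
qed

lemma pow_prod_gen_mult_gen_pow:
  fixes e :: int
  assumes i: "i \<in> {1..n}" and e: "e \<in> {1, -1}"
  shows "\<exists>m'. P.pow_prod gen [1..<n + 1] m \<otimes>\<^bsub>P\<^esub> gen i [^]\<^bsub>P\<^esub> e = P.pow_prod gen [1..<n + 1] m'"
proof -
  have "set [i + 1..<n + 1] \<subseteq> {i + 1..n}" by auto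
  then obtain m' where m': "P.pow_prod gen [i + 1..<n + 1] m \<otimes>\<^bsub>P\<^esub> gen i [^]\<^bsub>P\<^esub> e
      = gen i [^]\<^bsub>P\<^esub> e \<otimes>\<^bsub>P\<^esub> P.pow_prod gen [i + 1..<n + 1] m'"
    using pow_prod_mult_gen_pow[OF distinct_upt _ i e, of "i + 1" "n + 1" m] by blast
  define m'' where "m'' k = (if k < i then m k else if k = i then m i + e else m' k)" for k
  have closed: "gen ` set [1..<i] \<subseteq> carrier P" "gen ` set [i + 1..<n + 1] \<subseteq> carrier P"
    using i by auto
  have "P.pow_prod gen [1..<n + 1] m \<otimes>\<^bsub>P\<^esub> gen i [^]\<^bsub>P\<^esub> e
      = P.pow_prod gen [1..<i] m \<otimes>\<^bsub>P\<^esub> (gen i [^]\<^bsub>P\<^esub> m i \<otimes>\<^bsub>P\<^esub> (gen i [^]\<^bsub>P\<^esub> e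
          \<otimes>\<^bsub>P\<^esub> P.pow_prod gen [i + 1..<n + 1] m'))"
    using i closed m' by (subst pow_prod_gen_split[OF i]) (simp add: P.m_assoc del: upt_Suc)
  also have "\<dots> = P.pow_prod gen [1..<i] m'' \<otimes>\<^bsub>P\<^esub>
      (gen i [^]\<^bsub>P\<^esub> m'' i \<otimes>\<^bsub>P\<^esub> P.pow_prod gen [i + 1..<n + 1] m'')"
  proof -
    have "P.pow_prod gen [1..<i] m'' = P.pow_prod gen [1..<i] m"
      by (intro P.pow_prod_cong) (auto simp: m''_def)
    moreover have "P.pow_prod gen [i + 1..<n + 1] m'' = P.pow_prod gen [i + 1..<n + 1] m'"
      by (intro P.pow_prod_cong) (auto simp: m''_def)
    ultimately show ?thesis
      using i closed by (simp add: m''_def P.int_pow_mult P.m_assoc del: upt_Suc)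
  qed
  also have "\<dots> = P.pow_prod gen [1..<n + 1] m''"
    using i by (simp only: pow_prod_gen_split)
  finally show ?thesis by blast
qed

lemma P_normal_form: "x \<in> carrier P \<Longrightarrow> \<exists>m. x = P.pow_prod gen [1..<n + 1] m"
proof -
  have "\<exists>m. pc w = P.pow_prod gen [1..<n + 1] m" if "w \<in> words_over PA" for w
    using that
  proof (induction w rule: rev_induct)
    case Nil
    have "pc [] = P.pow_prod gen [1..<n + 1] (\<lambda>_. 0)"
      by (simp add: P.pow_prod_zero image_subset_iff pc_def pres_group_simps(3) del: upt_Suc)
    then show ?case by blast
  next
    case (snoc x w)
    obtain i b where i: "i \<in> {1..n}" and x: "x = (n + i, b)"
      using snoc.prems by (intro that[of "fst x - n" "snd x"]) auto
    obtain m where m: "pc w = P.pow_prod gen [1..<n + 1] m"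
      using snoc by auto
    have "pc (w @ [x]) = P.pow_prod gen [1..<n + 1] m \<otimes>\<^bsub>P\<^esub> gen i [^]\<^bsub>P\<^esub> (if b then 1 else -1 :: int)"
      using snoc.prems i by (simp add: x m pc_letter P.int_pow_neg flip: pc_mult del: upt_Suc)
    then show ?case
      using pow_prod_gen_mult_gen_pow[OF i, of "if b then 1 else -1"] by auto
  qed
  then show "x \<in> carrier P \<Longrightarrow> ?thesis" by (auto simp: P_carrier)
qed

section \<open>The presented group is isomorphic to the kernel\<close>

text \<open>The junk value outside PA keeps the generator map total, as pres_lift requires.\<close>

definition alpha_gen :: "nat \<Rightarrow> nat fword set" where
  "alpha_gen j = (if j \<in> PA then alpha (j - n) else \<one>\<^bsub>W\<^esub>)"

lemma alpha_gen_closed: "range alpha_gen \<subseteq> carrier W"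
  unfolding alpha_gen_def by (auto intro!: alpha_closed)

lemma alpha_gen_high [simp]: "i \<in> {1..n} \<Longrightarrow> alpha_gen (n + i) = alpha i"
  by (simp add: alpha_gen_def)

lemma word_eval_bott_rels: "r \<in> bott_rels C n \<Longrightarrow> W.word_eval alpha_gen r = \<one>\<^bsub>W\<^esub>"
proof -
  assume "r \<in> bott_rels C n"
  then obtain p q where pq: "n + 1 \<le> p" "p < q" "q \<le> 2*n" "r = x_rel C n p q"
    unfolding bott_rels_def by blast
  define i j where "i = p - n" and "j = q - n"
  have i: "i \<in> {1..n}" and j: "j \<in> {1..n}" and "i < j" and r: "r = x_rel C n (n + i) (n + j)"
    using pq by (auto simp: i_def j_def)
  let ?a = "alpha j" and ?c = "W.conjg (alpha i) (alpha j)"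
  have "W.word_eval alpha_gen r
      = W.conjg (alpha i) (if C i j then inv\<^bsub>W\<^esub> ?a else ?a) \<otimes>\<^bsub>W\<^esub> inv\<^bsub>W\<^esub> ?a"
    using i j by (simp add: r x_rel_def W.word_eval_Cons W.conjg_def W.m_assoc)
  also have "\<dots> = \<one>\<^bsub>W\<^esub>"
    using i j conjg_alpha_alpha[OF i j \<open>i < j\<close>] by (simp add: W.conjg_inv)
  finally show ?thesis .
qed

definition alpha_hom :: "nat fword set \<Rightarrow> nat fword set" where
  "alpha_hom = W.pres_lift alpha_gen"

lemma alpha_hom_hom: "alpha_hom \<in> hom P W"
  unfolding alpha_hom_def by (rule W.pres_lift_hom[OF alpha_gen_closed word_eval_bott_rels])

lemma group_hom_alpha_hom: "group_hom P W alpha_hom"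
  by (simp add: group_hom_def group_hom_axioms_def alpha_hom_hom P.is_group W.is_group)

lemma alpha_hom_pc: "w \<in> words_over PA \<Longrightarrow> alpha_hom (pc w) = W.word_eval alpha_gen w"
  unfolding alpha_hom_def pc_def by (rule W.pres_lift_class[OF alpha_gen_closed word_eval_bott_rels])

lemma alpha_hom_gen: "i \<in> {1..n} \<Longrightarrow> alpha_hom (gen i) = alpha i"
  by (simp add: gen_def alpha_hom_pc W.word_eval_Cons)

lemma P_letters_eq_gen_image: "(\<lambda>a. pc [(a, True)]) ` PA = gen ` {1..n}"
  by (simp only: PA_eq_image image_image gen_def[abs_def])

lemma alpha_hom_image: "alpha_hom ` carrier P = H"
proof -
  have "carrier P = generate P (gen ` {1..n})"
    using pres_group_generated[of PA "bott_rels C n", folded pc_def] by (simp only: P_letters_eq_gen_image)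
  then have "alpha_hom ` carrier P = alpha_hom ` generate P (gen ` {1..n})"
    by simp
  also have "\<dots> = generate W (alpha_hom ` gen ` {1..n})"
    by (rule group_hom.generate_img[OF group_hom_alpha_hom, symmetric]) auto
  also have "alpha_hom ` gen ` {1..n} = alpha ` {1..n}"
    by (simp add: image_image alpha_hom_gen)
  finally show ?thesis .
qed

definition refl_gen :: "nat \<Rightarrow> nat \<Rightarrow> int \<times> bool" where
  "refl_gen f a = (if a = f then (0, True) else if a = n + f then (1, True) else (0, False))"

lemma word_eval_refl_gen_cox_rels:
  "r \<in> cox_rels n \<Longrightarrow> dihedral.word_eval (refl_gen f) r = \<one>\<^bsub>dihedral\<^esub>"
  by (auto simp: cox_rels_def dihedral.word_eval_Cons refl_gen_def)

definition coord :: "nat \<Rightarrow> nat fword set \<Rightarrow> int \<times> bool" where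
  "coord f = dihedral.pres_lift (refl_gen f)"

lemma group_hom_coord: "group_hom W dihedral (coord f)"
  unfolding group_hom_def group_hom_axioms_def coord_def cox_W_def
  using dihedral.pres_lift_hom[of "refl_gen f" "cox_rels n"] word_eval_refl_gen_cox_rels
  by (simp add: group_pres_group group_dihedral)

lemma coord_alpha:
  assumes f: "f \<in> {1..n}" and k: "k \<in> {1..n}"
  shows "coord f (alpha k) = (if f = k then (1, False) else (0, f \<in> set (row k)))"
proof -
  have letters: "dihedral.word_eval (refl_gen f) (map (\<lambda>l. (l, True)) L) = (0, odd (count_list L f))"
    if "set L \<subseteq> {1..n}" for L
    using that f by (induction L) (auto simp: dihedral.word_eval_Cons refl_gen_def)
  have "coord f (alpha k) = dihedral.word_eval (refl_gen f) (alpha_word C n (n + k))"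
    unfolding coord_def alpha_def cl_def
    using dihedral.pres_lift_class[of "refl_gen f" "cox_rels n"] word_eval_refl_gen_cox_rels
      alpha_word_words[OF k] by simp
  moreover have "dihedral.word_eval (refl_gen f) (map (\<lambda>l. (l, True)) (row k)) = (0, f \<in> set (row k))"
    using letters[of "row k"] by (auto simp: count_list_distinct distinct_row)
  ultimately show ?thesis
    using f k by (auto simp: alpha_word_eq dihedral.word_eval_Cons refl_gen_def set_row)
qed

lemma pow_prod_alpha_eq_one_imp_zero:
  assumes one: "W.pow_prod alpha [1..<n + 1] m = \<one>\<^bsub>W\<^esub>" and f: "f \<in> {1..n}"
  shows "m f = 0"
proof -
  let ?L = "[1..<n + 1]"
  have "coord f (W.pow_prod alpha ?L m) = dihedral.pow_prod (coord f \<circ> alpha) ?L m"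
    by (rule group_hom.hom_pow_prod[OF group_hom_coord]) auto
  moreover have "coord f (W.pow_prod alpha ?L m) = \<one>\<^bsub>dihedral\<^esub>"
    using one group_hom.hom_one[OF group_hom_coord] by simp
  moreover have "\<bar>fst (dihedral.pow_prod (coord f \<circ> alpha) ?L m)\<bar> = \<bar>m f\<bar>"
    using f by (intro dihedral_pow_prod_translation_part sorted_wrt_upt) (auto simp: coord_alpha set_row)
  ultimately show ?thesis by simp
qed

lemma alpha_hom_inj: "inj_on alpha_hom (carrier P)"
proof -
  have "x = \<one>\<^bsub>P\<^esub>" if x: "x \<in> carrier P" and hx: "alpha_hom x = \<one>\<^bsub>W\<^esub>" for x
  proof -
    let ?L = "[1..<n + 1]"
    obtain m where m: "x = P.pow_prod gen ?L m"
      using P_normal_form[OF x] by blast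
    have "alpha_hom x = W.pow_prod (alpha_hom \<circ> gen) ?L m"
      unfolding m by (rule group_hom.hom_pow_prod[OF group_hom_alpha_hom]) auto
    also have "\<dots> = W.pow_prod alpha ?L m"
      by (rule W.pow_prod_cong) (auto simp: alpha_hom_gen)
    finally have "m f = 0" if "f \<in> {1..n}" for f
      using hx that pow_prod_alpha_eq_one_imp_zero by simp
    then have "x = P.pow_prod gen ?L (\<lambda>_. 0)"
      unfolding m by (intro P.pow_prod_cong) auto
    then show ?thesis
      by (simp add: P.pow_prod_zero image_subset_iff del: upt_Suc)
  qed
  then show ?thesis
    using group_hom.inj_iff_trivial_ker[OF group_hom_alpha_hom] group_hom.hom_one[OF group_hom_alpha_hom]
    by (auto simp: kernel_def)
qed

lemma alpha_hom_letter:
  assumes "j \<in> PA"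
  shows "alpha_hom (pc [(j, True)]) = cl (alpha_word C n j)"
proof -
  have "alpha (j - n) \<in> carrier W"
    using assms by (intro alpha_closed) auto
  then show ?thesis
    using assms by (simp add: alpha_hom_pc W.word_eval_Cons alpha_gen_def alpha_def)
qed

theorem kernel_presentation:
  "generate W (cl ` alpha_word C n ` PA) = K
   \<and> (\<exists>h. h \<in> iso P (W\<lparr>carrier := K\<rparr>) \<and> (\<forall>j\<in>PA. h (pc [(j, True)]) = cl (alpha_word C n j)))"
proof (intro conjI exI[of _ alpha_hom] ballI)
  have "cl ` alpha_word C n ` PA = alpha ` {1..n}"
    by (simp only: PA_eq_image image_image alpha_def[abs_def])
  then show "generate W (cl ` alpha_word C n ` PA) = K"
    using H_eq_kernel by simp
  show "alpha_hom \<in> iso P (W\<lparr>carrier := K\<rparr>)"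
    using alpha_hom_hom alpha_hom_inj alpha_hom_image H_eq_kernel
    by (auto simp: iso_def hom_def bij_betw_def)
qed (rule alpha_hom_letter)

end

theorem theorem2p1:
  fixes n :: nat and C :: "nat \<Rightarrow> nat \<Rightarrow> bool"
  assumes "n \<ge> 1" and "bott_matrix n C"
  shows "generate (cox_W n)
            (pres_class {1..2*n} (cox_rels n) ` alpha_word C n ` {n+1..2*n})
           = kernel (cox_W n) (Z2n n) (phi C n)
       \<and> (\<exists>h. h \<in> iso (pres_group {n+1..2*n} (bott_rels C n))
                        ((cox_W n)\<lparr>carrier := kernel (cox_W n) (Z2n n) (phi C n)\<rparr>)
             \<and> (\<forall>j\<in>{n+1..2*n}.
                  h (pres_class {n+1..2*n} (bott_rels C n) [(j, True)])
                  = pres_class {1..2*n} (cox_rels n) (alpha_word C n j)))"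
  using real_bott_tower.kernel_presentation[of n C]
  unfolding real_bott_tower.PA_def real_bott_tower.pc_def real_bott_tower.cl_def .

end
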